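(* Let $X$ be a regular Hausdorff space with countable pseudocharacter (every point is a $G_\delta$-set). Then the following are equivalent: (1) $X$ is semi-metrizable; (2) $\mathcal{F}(X)$ is symmetrizable; (3) $\mathcal{F}(X)$ is semi-metrizable.
   Context: $\mathcal{F}(X)$ is the set of nonempty finite subsets of $X$ with the Vietoris topology (base: $\langle U_1,\dots,U_k\rangle=\{A: A\subset\bigcup_i U_i,\ A\cap U_j\neq\emptyset\ \forall j\}$, $U_i$ open in $X$). A symmetric on a set $Y$ is a function $d:Y\times Y\to[0,\infty)$ with $d(x,y)=0\iff x=y$ and $d(x,y)=d(y,x)$; put $B(x,\varepsilon)=\{y: d(x,y)<\varepsilon\}$. $Y$ is symmetrizable if there is a symmetric $d$ such that $U\subset Y$ is open iff for each $x\in U$ some $B(x,\varepsilon)\subset U$; $Y$ is semi-metrizable if there is a symmetric $d$ such that for every $x$, $\{B(x,\varepsilon):\varepsilon>0\}$ is a neighborhood base at $x$. *)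

theory Defs
  imports "HOL-Analysis.Analysis"
begin

definition fin_subsets :: "'a topology \<Rightarrow> 'a set set" where
  "fin_subsets X = {A. finite A \<and> A \<noteq> {} \<and> A \<subseteq> topspace X}"

definition vietoris_basic :: "'a topology \<Rightarrow> 'a set list \<Rightarrow> 'a set set" where
  "vietoris_basic X Us =
     {A \<in> fin_subsets X. A \<subseteq> \<Union>(set Us) \<and> (\<forall>U\<in>set Us. A \<inter> U \<noteq> {})}"

text \<open>The Vietoris topology on F(X): generated by the base of all < U_1,...,U_k >
  with U_i open in X (a base generates the same topology as a subbase).\<close>
definition vietoris_fin :: "'a topology \<Rightarrow> 'a set topology" where
  "vietoris_fin X = topology_generated_by
     {vietoris_basic X Us | Us. \<forall>U\<in>set Us. openin X U}"

definition is_symmetric_on :: "'b set \<Rightarrow> ('b \<Rightarrow> 'b \<Rightarrow> real) \<Rightarrow> bool" where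
  "is_symmetric_on S d \<longleftrightarrow>
     (\<forall>x\<in>S. \<forall>y\<in>S. d x y \<ge> 0 \<and> (d x y = 0 \<longleftrightarrow> x = y) \<and> d x y = d y x)"

definition sball :: "'b topology \<Rightarrow> ('b \<Rightarrow> 'b \<Rightarrow> real) \<Rightarrow> 'b \<Rightarrow> real \<Rightarrow> 'b set" where
  "sball T d x e = {y \<in> topspace T. d x y < e}"

definition symmetrizable :: "'b topology \<Rightarrow> bool" where
  "symmetrizable T \<longleftrightarrow> (\<exists>d. is_symmetric_on (topspace T) d \<and>
     (\<forall>U. openin T U \<longleftrightarrow>
          U \<subseteq> topspace T \<and> (\<forall>x\<in>U. \<exists>e>0. sball T d x e \<subseteq> U)))"

definition semi_metrizable :: "'b topology \<Rightarrow> bool" where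
  "semi_metrizable T \<longleftrightarrow> (\<exists>d. is_symmetric_on (topspace T) d \<and>
     (\<forall>x\<in>topspace T.
        (\<forall>e>0. \<exists>V. openin T V \<and> x \<in> V \<and> V \<subseteq> sball T d x e) \<and>
        (\<forall>U. openin T U \<and> x \<in> U \<longrightarrow> (\<exists>e>0. sball T d x e \<subseteq> U))))"

definition countable_pseudocharacter :: "'a topology \<Rightarrow> bool" where
  "countable_pseudocharacter X \<longleftrightarrow> (\<forall>x\<in>topspace X. \<exists>\<U>. countable \<U> \<and> \<U> \<noteq> {} \<and>
     (\<forall>U\<in>\<U>. openin X U) \<and> \<Inter>\<U> = {x})"

end

theory Submission
  imports Defs
begin

text \<open>
  The Hausdorff distance of a semi-metric on \<open>X\<close> is a semi-metric for the Vietoris topology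
  on \<open>F(X)\<close>, and semi-metrizable spaces are symmetrizable. Conversely, let \<open>D\<close> symmetrize \<open>F(X)\<close>.
  The non-singletons form an open subset of \<open>F(X)\<close>, and every neighbourhood of \<open>{p}\<close>
  contains all finite subsets of some neighbourhood of \<open>p\<close>; hence
  \<open>d(p,q) = D({p},{q})\<close> symmetrizes \<open>X\<close>. A Hausdorff space symmetrized by \<open>d\<close> in which
  every closure point is the limit of a sequence (Frechet-Urysohn) is semi-metrized by
  \<open>d\<close>: a sequence staying outside the ball \<open>B(x,e)\<close> cannot converge to \<open>x\<close>.

  To see that \<open>X\<close> is Frechet-Urysohn, let \<open>x\<close> be in the closure of \<open>C\<close> but not the limit
  of a sequence in \<open>C\<close>. Symmetrizability gives a countable \<open>C\<^sub>0 \<subseteq> C\<close> with \<open>x\<close> in its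
  closure and a sequence \<open>y\<^sub>n \<rightarrow> x\<close> of points other than \<open>x\<close>; regularity and countable
  pseudocharacter give decreasing neighbourhoods \<open>W\<^sub>n\<close> of \<open>x\<close> whose closures meet in
  \<open>x\<close> only. Enumerate \<open>C\<^sub>0 \<inter> W\<^sub>n\<close> as \<open>c(n,j)\<close>. Every neighbourhood of \<open>{x}\<close> in
  \<open>F(X)\<close> contains one of the fans \<open>A(n,j) = {c(n,j), x, y\<^sub>n, ..., y\<^sub>n\<^sub>+\<^sub>j}\<close>, yet they form
  a closed set: along fans \<open>D\<close>-converging to \<open>B\<close> the index \<open>n\<close> stays bounded (otherwise the
  points \<open>c(n,j)\<close> would converge to \<open>x\<close>), then \<open>n + j\<close> stays bounded (some \<open>y\<^sub>J\<close> is
  missing from \<open>B\<close>), so some fan recurs infinitely often and equals \<open>B\<close>.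
\<close>

section \<open>Finite subsets with the Vietoris topology\<close>

lemma topspace_vietoris_fin [simp]: "topspace (vietoris_fin X) = fin_subsets X"
proof -
  have "fin_subsets X = vietoris_basic X [topspace X]"
    by (auto simp: vietoris_basic_def fin_subsets_def)
  then have "fin_subsets X \<in> {vietoris_basic X Us | Us. \<forall>U\<in>set Us. openin X U}"
    by auto
  then show ?thesis
    unfolding vietoris_fin_def topology_generated_by_topspace
    by (auto simp: vietoris_basic_def)
qed

lemma openin_vietoris_basic:
  "(\<And>U. U \<in> set Us \<Longrightarrow> openin X U) \<Longrightarrow> openin (vietoris_fin X) (vietoris_basic X Us)"
  unfolding vietoris_fin_def by (rule topology_generated_by_Basis) blast

lemma mem_vietoris_basic_map:
  "E \<in> vietoris_basic X (map S as) \<longleftrightarrow>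
     E \<in> fin_subsets X \<and> E \<subseteq> (\<Union>a\<in>set as. S a) \<and> (\<forall>a\<in>set as. E \<inter> S a \<noteq> {})"
  by (auto simp: vietoris_basic_def)

lemma openin_Inter_members_containing:
  "(\<And>U. U \<in> set Us \<Longrightarrow> openin X U) \<Longrightarrow> a \<in> \<Union>(set Us) \<Longrightarrow> openin X (\<Inter>{U \<in> set Us. a \<in> U})"
  by (intro openin_Inter) auto

lemma vietoris_basic_shrink:
  assumes A: "A \<in> vietoris_basic X Us" and E: "E \<in> fin_subsets X"
    and S: "\<And>a. a \<in> A \<Longrightarrow> S a \<subseteq> \<Inter>{U \<in> set Us. a \<in> U}"
    and cover: "E \<subseteq> (\<Union>a\<in>A. S a)" and meet: "\<And>a. a \<in> A \<Longrightarrow> E \<inter> S a \<noteq> {}"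
  shows "E \<in> vietoris_basic X Us"
proof -
  have "E \<subseteq> \<Union>(set Us)"
  proof
    fix b assume "b \<in> E"
    then obtain a where a: "a \<in> A" "b \<in> S a" using cover by blast
    moreover obtain U where "U \<in> set Us" "a \<in> U"
      using A a(1) by (auto simp: vietoris_basic_def)
    ultimately show "b \<in> \<Union>(set Us)" using S by blast
  qed
  moreover have "E \<inter> U \<noteq> {}" if U: "U \<in> set Us" for U
  proof -
    obtain a where "a \<in> A" "a \<in> U" using A U by (auto simp: vietoris_basic_def)
    then show ?thesis using meet[of a] S[of a] U by blast
  qed
  ultimately show ?thesis using E by (simp add: vietoris_basic_def)
qed

lemma openin_vietoris_fin_imp_basic:
  assumes "openin (vietoris_fin X) Q" "A \<in> Q"
  shows "\<exists>Us. (\<forall>U\<in>set Us. openin X U) \<and> A \<in> vietoris_basic X Us \<and> vietoris_basic X Us \<subseteq> Q"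
proof -
  have "generate_topology_on {vietoris_basic X Us | Us. \<forall>U\<in>set Us. openin X U} Q"
    using assms(1) unfolding vietoris_fin_def by (rule openin_topology_generated_by)
  then show ?thesis using assms(2)
  proof (induction arbitrary: A)
    case (Int Q1 Q2)
    then obtain Us Vs
      where Us: "\<forall>U\<in>set Us. openin X U" "A \<in> vietoris_basic X Us" "vietoris_basic X Us \<subseteq> Q1"
        and Vs: "\<forall>V\<in>set Vs. openin X V" "A \<in> vietoris_basic X Vs" "vietoris_basic X Vs \<subseteq> Q2"
      by blast
    define S where "S a = \<Inter>{U \<in> set Us. a \<in> U} \<inter> \<Inter>{V \<in> set Vs. a \<in> V}" for a
    have A: "A \<in> fin_subsets X" "A \<subseteq> \<Union>(set Us)" "A \<subseteq> \<Union>(set Vs)"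
      using Us(2) Vs(2) by (auto simp: vietoris_basic_def)
    then obtain as where as: "set as = A"
      using finite_list unfolding fin_subsets_def by blast
    have "openin X (S a)" if "a \<in> A" for a
      unfolding S_def using A that Us(1) Vs(1) by (intro openin_Int openin_Inter_members_containing) auto
    moreover have "A \<in> vietoris_basic X (map S as)"
      using A(1) as by (auto simp: mem_vietoris_basic_map S_def)
    moreover have "vietoris_basic X (map S as) \<subseteq> Q1 \<inter> Q2"
    proof
      fix E assume "E \<in> vietoris_basic X (map S as)"
      then have E: "E \<in> fin_subsets X" "E \<subseteq> (\<Union>a\<in>A. S a)" "\<And>a. a \<in> A \<Longrightarrow> E \<inter> S a \<noteq> {}"
        using as by (auto simp: mem_vietoris_basic_map)
      have "E \<in> vietoris_basic X Us"
        by (rule vietoris_basic_shrink[OF Us(2) E(1) _ E(2,3)]) (auto simp: S_def)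
      moreover have "E \<in> vietoris_basic X Vs"
        by (rule vietoris_basic_shrink[OF Vs(2) E(1) _ E(2,3)]) (auto simp: S_def)
      ultimately show "E \<in> Q1 \<inter> Q2" using Us(3) Vs(3) by blast
    qed
    ultimately show ?case using as by (intro exI[of _ "map S as"]) auto
  next
    case (UN K)
    then show ?case by blast
  qed auto
qed

lemma vietoris_fin_nbhd_singleton:
  assumes "openin (vietoris_fin X) Q" "{p} \<in> Q"
  shows "\<exists>V. openin X V \<and> p \<in> V \<and> (\<forall>E\<in>fin_subsets X. E \<subseteq> V \<longrightarrow> E \<in> Q)"
proof -
  obtain Us where Us: "\<forall>U\<in>set Us. openin X U" "{p} \<in> vietoris_basic X Us" "vietoris_basic X Us \<subseteq> Q"
    using openin_vietoris_fin_imp_basic[OF assms] by blast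
  let ?V = "\<Inter>{U \<in> set Us. p \<in> U}"
  have "p \<in> \<Union>(set Us)" using Us(2) by (auto simp: vietoris_basic_def)
  then have "openin X ?V" using Us(1) by (intro openin_Inter_members_containing) auto
  moreover have "E \<in> Q" if "E \<in> fin_subsets X" "E \<subseteq> ?V" for E
  proof -
    have "E \<inter> ?V \<noteq> {}" using that by (auto simp: fin_subsets_def)
    then have "E \<in> vietoris_basic X Us"
      using vietoris_basic_shrink[OF Us(2) that(1), of "\<lambda>_. ?V"] that(2) by auto
    then show ?thesis using Us(3) by blast
  qed
  ultimately show ?thesis by blast
qed

lemma limitin_vietoris_fin_subset:
  assumes "limitin (vietoris_fin X) E B sequentially" "openin X V" "B \<subseteq> V"
  shows "eventually (\<lambda>k. E k \<subseteq> V) sequentially"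
proof -
  have "B \<in> vietoris_basic X [V]"
    using limitin_topspace[OF assms(1)] assms(3) by (auto simp: vietoris_basic_def fin_subsets_def)
  then have "eventually (\<lambda>k. E k \<in> vietoris_basic X [V]) sequentially"
    using assms(1,2) openin_vietoris_basic[of "[V]" X] unfolding limitin_def by auto
  then show ?thesis by (rule eventually_mono) (simp add: vietoris_basic_def)
qed

lemma openin_vietoris_fin_non_singletons:
  assumes "Hausdorff_space X"
  shows "openin (vietoris_fin X) (fin_subsets X - (\<lambda>p. {p}) ` topspace X)"
proof (subst openin_subopen, intro ballI)
  fix E assume E: "E \<in> fin_subsets X - (\<lambda>p. {p}) ` topspace X"
  then obtain a where a: "a \<in> E" and E_sub: "E \<subseteq> topspace X" by (auto simp: fin_subsets_def)
  then have "E \<noteq> {a}" using E by auto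
  then obtain b where b: "b \<in> E" "b \<noteq> a" using a by blast
  obtain U\<^sub>a U\<^sub>b where U: "openin X U\<^sub>a" "openin X U\<^sub>b" "a \<in> U\<^sub>a" "b \<in> U\<^sub>b" "disjnt U\<^sub>a U\<^sub>b"
    using assms a b E_sub unfolding Hausdorff_space_def by (metis subsetD)
  let ?T = "vietoris_basic X [U\<^sub>a, U\<^sub>b, topspace X]"
  have "openin (vietoris_fin X) ?T" by (rule openin_vietoris_basic) (use U in auto)
  moreover have "E \<in> ?T" using E a b U(3,4) E_sub by (auto simp: vietoris_basic_def)
  moreover have "?T \<subseteq> fin_subsets X - (\<lambda>p. {p}) ` topspace X"
  proof
    fix E' assume "E' \<in> ?T"
    then have "E' \<in> fin_subsets X" "E' \<inter> U\<^sub>a \<noteq> {}" "E' \<inter> U\<^sub>b \<noteq> {}" by (auto simp: vietoris_basic_def)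
    then show "E' \<in> fin_subsets X - (\<lambda>p. {p}) ` topspace X" using U(5) by (auto simp: disjnt_def)
  qed
  ultimately show "\<exists>T. openin (vietoris_fin X) T \<and> E \<in> T \<and> T \<subseteq> fin_subsets X - (\<lambda>p. {p}) ` topspace X"
    by meson
qed

lemma openin_from_vietoris_fin:
  assumes U: "U \<subseteq> topspace X"
    and Q: "openin (vietoris_fin X) (fin_subsets X - (\<lambda>p. {p}) ` (topspace X - U))"
  shows "openin X U"
proof (subst openin_subopen, intro ballI)
  fix p assume "p \<in> U"
  then have "{p} \<in> fin_subsets X - (\<lambda>p. {p}) ` (topspace X - U)" using U by (auto simp: fin_subsets_def)
  then obtain V where V: "openin X V" "p \<in> V"
    "\<forall>E\<in>fin_subsets X. E \<subseteq> V \<longrightarrow> E \<in> fin_subsets X - (\<lambda>p. {p}) ` (topspace X - U)"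
    using vietoris_fin_nbhd_singleton[OF Q] by meson
  have "V \<subseteq> U"
  proof
    fix q assume "q \<in> V"
    moreover from this have "{q} \<in> fin_subsets X" using openin_subset[OF V(1)] by (auto simp: fin_subsets_def)
    ultimately have "{q} \<notin> (\<lambda>p. {p}) ` (topspace X - U)" using V(3) by blast
    then show "q \<in> U" using \<open>{q} \<in> fin_subsets X\<close> by (auto simp: fin_subsets_def)
  qed
  with V(1,2) show "\<exists>T. openin X T \<and> p \<in> T \<and> T \<subseteq> U" by meson
qed

section \<open>The Hausdorff distance\<close>

definition hausdorff_dist :: "('a \<Rightarrow> 'a \<Rightarrow> real) \<Rightarrow> 'a set \<Rightarrow> 'a set \<Rightarrow> real" where
  "hausdorff_dist d A B =
     max (Max ((\<lambda>a. Min ((\<lambda>b. d a b) ` B)) ` A)) (Max ((\<lambda>b. Min ((\<lambda>a. d a b) ` A)) ` B))"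

lemma hausdorff_dist_less_iff:
  assumes "finite A" "A \<noteq> {}" "finite B" "B \<noteq> {}"
  shows "hausdorff_dist d A B < e \<longleftrightarrow> (\<forall>a\<in>A. \<exists>b\<in>B. d a b < e) \<and> (\<forall>b\<in>B. \<exists>a\<in>A. d a b < e)"
  using assms by (simp add: hausdorff_dist_def Max_less_iff Min_less_iff)

lemma hausdorff_dist_le_iff:
  assumes "finite A" "A \<noteq> {}" "finite B" "B \<noteq> {}"
  shows "hausdorff_dist d A B \<le> e \<longleftrightarrow> (\<forall>a\<in>A. \<exists>b\<in>B. d a b \<le> e) \<and> (\<forall>b\<in>B. \<exists>a\<in>A. d a b \<le> e)"
  using assms by (simp add: hausdorff_dist_def Max_le_iff Min_le_iff)

lemma is_symmetric_on_hausdorff_dist: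
  assumes d: "is_symmetric_on (topspace X) d"
  shows "is_symmetric_on (fin_subsets X) (hausdorff_dist d)"
  unfolding is_symmetric_on_def
proof (intro ballI conjI)
  fix A B assume "A \<in> fin_subsets X" "B \<in> fin_subsets X"
  then have fin: "finite A" "A \<noteq> {}" "finite B" "B \<noteq> {}" and "A \<union> B \<subseteq> topspace X"
    by (auto simp: fin_subsets_def)
  then have d_AB: "d a b \<ge> 0 \<and> (d a b = 0 \<longleftrightarrow> a = b) \<and> d a b = d b a" if "a \<in> A \<union> B" "b \<in> A \<union> B" for a b
    using d that unfolding is_symmetric_on_def by blast
  show nonneg: "0 \<le> hausdorff_dist d A B"
    using fin d_AB by (force simp: not_less[symmetric] hausdorff_dist_less_iff)
  have "hausdorff_dist d A B \<le> 0 \<longleftrightarrow> A = B"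
  proof
    assume "hausdorff_dist d A B \<le> 0"
    then have "(\<forall>a\<in>A. \<exists>b\<in>B. d a b \<le> 0) \<and> (\<forall>b\<in>B. \<exists>a\<in>A. d a b \<le> 0)"
      using fin by (simp add: hausdorff_dist_le_iff)
    then show "A = B" using d_AB by (smt (verit) UnCI subsetI subset_antisym)
  next
    assume "A = B"
    then show "hausdorff_dist d A B \<le> 0"
      using fin d_AB by (simp add: hausdorff_dist_le_iff) (metis UnI1 order_refl)
  qed
  then show "hausdorff_dist d A B = 0 \<longleftrightarrow> A = B" using nonneg by linarith
  have "hausdorff_dist d A B < e \<longleftrightarrow> hausdorff_dist d B A < e" for e
    using fin d_AB by (auto simp: hausdorff_dist_less_iff)
  then show "hausdorff_dist d A B = hausdorff_dist d B A"
    by (metis less_irrefl linorder_neqE)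
qed

lemma hausdorff_ball_contains_vietoris_nbhd:
  assumes nbhd: "\<forall>a\<in>topspace X. \<forall>e>0. \<exists>V. openin X V \<and> a \<in> V \<and> V \<subseteq> sball X d a e"
    and A: "A \<in> fin_subsets X" and e: "e > 0"
  shows "\<exists>W. openin (vietoris_fin X) W \<and> A \<in> W \<and> W \<subseteq> sball (vietoris_fin X) (hausdorff_dist d) A e"
proof -
  have fin: "finite A" "A \<noteq> {}" "A \<subseteq> topspace X" using A by (auto simp: fin_subsets_def)
  then have "\<forall>a\<in>A. \<exists>V. openin X V \<and> a \<in> V \<and> V \<subseteq> sball X d a e" using nbhd e by blast
  from bchoice[OF this] obtain V
    where V: "\<forall>a\<in>A. openin X (V a) \<and> a \<in> V a \<and> V a \<subseteq> sball X d a e" by blast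
  obtain as where as: "set as = A" using finite_list[OF fin(1)] by blast
  let ?W = "vietoris_basic X (map V as)"
  have "openin (vietoris_fin X) ?W" by (rule openin_vietoris_basic) (use V as in auto)
  moreover have "A \<in> ?W" using A V as by (auto simp: mem_vietoris_basic_map)
  moreover have "?W \<subseteq> sball (vietoris_fin X) (hausdorff_dist d) A e"
  proof
    fix E assume "E \<in> ?W"
    then have E: "E \<in> fin_subsets X" "E \<subseteq> (\<Union>a\<in>A. V a)" "\<And>a. a \<in> A \<Longrightarrow> E \<inter> V a \<noteq> {}"
      using as by (auto simp: mem_vietoris_basic_map)
    have "\<exists>b\<in>E. d a b < e" if "a \<in> A" for a
      using E(3) V that unfolding sball_def by blast
    moreover have "\<exists>a\<in>A. d a b < e" if "b \<in> E" for b
      using E(2) V that unfolding sball_def by blast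
    ultimately have "hausdorff_dist d A E < e"
      using fin E(1) by (simp add: hausdorff_dist_less_iff fin_subsets_def)
    then show "E \<in> sball (vietoris_fin X) (hausdorff_dist d) A e" using E(1) by (simp add: sball_def)
  qed
  ultimately show ?thesis by blast
qed

lemma hausdorff_ball_inside_vietoris_open:
  assumes ball: "\<forall>a\<in>topspace X. \<forall>U. openin X U \<and> a \<in> U \<longrightarrow> (\<exists>e>0. sball X d a e \<subseteq> U)"
    and Q: "openin (vietoris_fin X) Q" "A \<in> Q"
  shows "\<exists>e>0. sball (vietoris_fin X) (hausdorff_dist d) A e \<subseteq> Q"
proof -
  obtain Us where Us: "\<forall>U\<in>set Us. openin X U" "A \<in> vietoris_basic X Us" "vietoris_basic X Us \<subseteq> Q"
    using openin_vietoris_fin_imp_basic[OF Q] by blast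
  have fin: "finite A" "A \<noteq> {}" "A \<subseteq> topspace X" "A \<subseteq> \<Union>(set Us)"
    using Us(2) by (auto simp: vietoris_basic_def fin_subsets_def)
  define G where "G a = \<Inter>{U \<in> set Us. a \<in> U}" for a
  have "\<forall>a\<in>A. \<exists>e>0. sball X d a e \<subseteq> G a"
  proof
    fix a assume a: "a \<in> A"
    then have "openin X (G a)"
      unfolding G_def using fin(4) Us(1) by (intro openin_Inter_members_containing) auto
    moreover have "a \<in> G a" unfolding G_def by blast
    ultimately show "\<exists>e>0. sball X d a e \<subseteq> G a" using ball a fin(3) by blast
  qed
  from bchoice[OF this] obtain r where r: "\<forall>a\<in>A. r a > 0 \<and> sball X d a (r a) \<subseteq> G a"
    by blast
  define e where "e = Min (r ` A)"
  have "e > 0" unfolding e_def using fin r by simp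
  have "E \<in> vietoris_basic X Us" if E: "E \<in> sball (vietoris_fin X) (hausdorff_dist d) A e" for E
  proof -
    have E: "E \<in> fin_subsets X" "hausdorff_dist d A E < e" using E by (simp_all add: sball_def)
    then have close: "\<forall>a\<in>A. \<exists>b\<in>E. d a b < e" "\<forall>b\<in>E. \<exists>a\<in>A. d a b < e"
      using fin by (simp_all add: hausdorff_dist_less_iff fin_subsets_def)
    show ?thesis
    proof (rule vietoris_basic_shrink[OF Us(2) E(1), of "\<lambda>a. sball X d a e"])
      fix a assume a: "a \<in> A"
      have "e \<le> r a" unfolding e_def using fin a by simp
      then have "sball X d a e \<subseteq> sball X d a (r a)" by (auto simp: sball_def)
      then show "sball X d a e \<subseteq> \<Inter>{U \<in> set Us. a \<in> U}" using r a unfolding G_def by blast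
      show "E \<inter> sball X d a e \<noteq> {}"
        using close(1) a E(1) by (force simp: sball_def fin_subsets_def)
    next
      show "E \<subseteq> (\<Union>a\<in>A. sball X d a e)"
        using close(2) E(1) by (force simp: sball_def fin_subsets_def)
    qed
  qed
  then show ?thesis using \<open>e > 0\<close> Us(3) by blast
qed

lemma semi_metrizable_vietoris_fin:
  assumes "semi_metrizable X"
  shows "semi_metrizable (vietoris_fin X)"
proof -
  obtain d where d: "is_symmetric_on (topspace X) d"
    and H: "\<forall>a\<in>topspace X. (\<forall>e>0. \<exists>V. openin X V \<and> a \<in> V \<and> V \<subseteq> sball X d a e) \<and>
              (\<forall>U. openin X U \<and> a \<in> U \<longrightarrow> (\<exists>e>0. sball X d a e \<subseteq> U))"
    using assms unfolding semi_metrizable_def by blast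
  have nbhd: "\<forall>a\<in>topspace X. \<forall>e>0. \<exists>V. openin X V \<and> a \<in> V \<and> V \<subseteq> sball X d a e"
    and ball: "\<forall>a\<in>topspace X. \<forall>U. openin X U \<and> a \<in> U \<longrightarrow> (\<exists>e>0. sball X d a e \<subseteq> U)"
    using H by blast+
  show ?thesis
    unfolding semi_metrizable_def topspace_vietoris_fin
  proof (intro exI[of _ "hausdorff_dist d"] conjI ballI allI impI)
    show "is_symmetric_on (fin_subsets X) (hausdorff_dist d)"
      by (rule is_symmetric_on_hausdorff_dist[OF d])
  next
    fix A and e :: real assume "A \<in> fin_subsets X" "0 < e"
    then show "\<exists>V. openin (vietoris_fin X) V \<and> A \<in> V \<and> V \<subseteq> sball (vietoris_fin X) (hausdorff_dist d) A e"
      by (rule hausdorff_ball_contains_vietoris_nbhd[OF nbhd])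
  next
    fix A Q assume "openin (vietoris_fin X) Q \<and> A \<in> Q"
    then show "\<exists>e>0. sball (vietoris_fin X) (hausdorff_dist d) A e \<subseteq> Q"
      using hausdorff_ball_inside_vietoris_open[OF ball] by blast
  qed
qed

section \<open>Symmetrizable spaces\<close>

definition symmetrizes :: "'b topology \<Rightarrow> ('b \<Rightarrow> 'b \<Rightarrow> real) \<Rightarrow> bool" where
  "symmetrizes T d \<longleftrightarrow> is_symmetric_on (topspace T) d \<and>
     (\<forall>U. openin T U \<longleftrightarrow> U \<subseteq> topspace T \<and> (\<forall>x\<in>U. \<exists>e>0. sball T d x e \<subseteq> U))"

lemma symmetrizable_iff_symmetrizes: "symmetrizable T \<longleftrightarrow> (\<exists>d. symmetrizes T d)"
  by (simp add: symmetrizable_def symmetrizes_def)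

lemma symmetrizes_openinD:
  "symmetrizes T d \<Longrightarrow> openin T U \<Longrightarrow> x \<in> U \<Longrightarrow> \<exists>e>0. sball T d x e \<subseteq> U"
  unfolding symmetrizes_def by simp

lemma symmetrizes_openinI:
  "symmetrizes T d \<Longrightarrow> U \<subseteq> topspace T \<Longrightarrow> (\<And>x. x \<in> U \<Longrightarrow> \<exists>e>0. sball T d x e \<subseteq> U) \<Longrightarrow> openin T U"
  unfolding symmetrizes_def by simp

lemma symmetrizesI:
  assumes "is_symmetric_on (topspace T) d"
    and "\<And>U x. openin T U \<Longrightarrow> x \<in> U \<Longrightarrow> \<exists>e>0. sball T d x e \<subseteq> U"
    and "\<And>U. U \<subseteq> topspace T \<Longrightarrow> \<forall>x\<in>U. \<exists>e>0. sball T d x e \<subseteq> U \<Longrightarrow> openin T U"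
  shows "symmetrizes T d"
  unfolding symmetrizes_def
proof (intro conjI allI iffI)
  show "is_symmetric_on (topspace T) d" by (rule assms(1))
next
  fix U assume "openin T U"
  then show "U \<subseteq> topspace T" by (rule openin_subset)
next
  fix U assume U: "openin T U"
  show "\<forall>x\<in>U. \<exists>e>0. sball T d x e \<subseteq> U"
  proof
    fix x assume "x \<in> U"
    with U show "\<exists>e>0. sball T d x e \<subseteq> U" by (rule assms(2))
  qed
next
  fix U assume "U \<subseteq> topspace T \<and> (\<forall>x\<in>U. \<exists>e>0. sball T d x e \<subseteq> U)"
  then show "openin T U" by (elim conjE) (rule assms(3))
qed

lemma semi_metrizable_imp_symmetrizable:
  assumes "semi_metrizable T"
  shows "symmetrizable T"
proof -
  obtain d where d: "is_symmetric_on (topspace T) d"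
    and H: "\<forall>x\<in>topspace T. (\<forall>e>0. \<exists>V. openin T V \<and> x \<in> V \<and> V \<subseteq> sball T d x e) \<and>
              (\<forall>U. openin T U \<and> x \<in> U \<longrightarrow> (\<exists>e>0. sball T d x e \<subseteq> U))"
    using assms unfolding semi_metrizable_def by blast
  have "symmetrizes T d"
  proof (rule symmetrizesI[OF d])
    fix U x assume "openin T U" "x \<in> U"
    moreover from this have "x \<in> topspace T" using openin_subset by blast
    ultimately show "\<exists>e>0. sball T d x e \<subseteq> U" using H by blast
  next
    fix U assume U: "U \<subseteq> topspace T" "\<forall>x\<in>U. \<exists>e>0. sball T d x e \<subseteq> U"
    show "openin T U"
    proof (subst openin_subopen, intro ballI)
      fix x assume x: "x \<in> U"
      then obtain e where e: "e > 0" "sball T d x e \<subseteq> U" using U(2) by meson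
      have "x \<in> topspace T" using U(1) x by blast
      then obtain V where "openin T V" "x \<in> V" "V \<subseteq> sball T d x e" using H e(1) by meson
      then show "\<exists>V. openin T V \<and> x \<in> V \<and> V \<subseteq> U" using e(2) by (meson subset_trans)
    qed
  qed
  then show ?thesis by (auto simp: symmetrizable_iff_symmetrizes)
qed

lemma symmetrizes_limitin:
  assumes d: "symmetrizes T d" and x: "x \<in> topspace T" and \<sigma>: "range \<sigma> \<subseteq> topspace T"
    and close: "\<And>k. d x (\<sigma> k) < inverse (Suc k)"
  shows "limitin T \<sigma> x sequentially"
  unfolding limitin_def
proof (intro conjI allI impI)
  fix U assume "openin T U \<and> x \<in> U"
  then obtain e where "e > 0" "sball T d x e \<subseteq> U" using symmetrizes_openinD[OF d] by meson
  have "eventually (\<lambda>k. inverse (real (Suc k)) < e) sequentially"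
    using order_tendstoD(2)[OF LIMSEQ_inverse_real_of_nat \<open>e > 0\<close>] .
  then show "eventually (\<lambda>k. \<sigma> k \<in> U) sequentially"
  proof (rule eventually_mono)
    fix k assume "inverse (real (Suc k)) < e"
    then have "\<sigma> k \<in> sball T d x e" using \<sigma> close[of k] by (simp add: sball_def image_subset_iff)
    then show "\<sigma> k \<in> U" using \<open>sball T d x e \<subseteq> U\<close> by blast
  qed
qed (rule x)

lemma symmetrizes_closedin_sequentially:
  assumes d: "symmetrizes T d" and S: "S \<subseteq> topspace T"
    and seq: "\<And>\<sigma> p. range \<sigma> \<subseteq> S \<Longrightarrow> limitin T \<sigma> p sequentially \<Longrightarrow> p \<in> S"
  shows "closedin T S"
proof -
  have "\<exists>e>0. sball T d p e \<subseteq> topspace T - S" if p: "p \<in> topspace T - S" for p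
  proof (rule ccontr)
    assume far: "\<not> ?thesis"
    have "\<exists>q\<in>S. d p q < inverse (Suc k)" for k
      using far[unfolded not_ex, rule_format, of "inverse (Suc k)"] by (auto simp: sball_def)
    then obtain \<sigma> where \<sigma>: "\<And>k. \<sigma> k \<in> S \<and> d p (\<sigma> k) < inverse (Suc k)" by metis
    then have "limitin T \<sigma> p sequentially" using symmetrizes_limitin[OF d] p S by blast
    then show False using seq \<sigma> p by blast
  qed
  then show ?thesis unfolding closedin_def using S by (intro conjI symmetrizes_openinI[OF d]) auto
qed

lemma symmetrizes_countable_tightness:
  assumes d: "symmetrizes T d" and S: "S \<subseteq> topspace T" and x: "x \<in> T closure_of S"
  shows "\<exists>S0\<subseteq>S. countable S0 \<and> x \<in> T closure_of S0"
proof -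
  define K where "K = \<Union>{T closure_of S0 | S0. S0 \<subseteq> S \<and> countable S0}"
  have "closedin T K"
  proof (rule symmetrizes_closedin_sequentially[OF d])
    show "K \<subseteq> topspace T" unfolding K_def using closure_of_subset_topspace by fastforce
  next
    fix \<sigma> p assume "range \<sigma> \<subseteq> K" and lim: "limitin T \<sigma> p sequentially"
    then have "\<forall>k. \<exists>S0. S0 \<subseteq> S \<and> countable S0 \<and> \<sigma> k \<in> T closure_of S0" unfolding K_def by blast
    then obtain S0 where S0: "\<And>k. S0 k \<subseteq> S \<and> countable (S0 k) \<and> \<sigma> k \<in> T closure_of S0 k" by metis
    have "\<sigma> k \<in> T closure_of (\<Union>(range S0))" for k
      using S0 closure_of_mono[of "S0 k" "\<Union>(range S0)"] by blast
    then have "p \<in> T closure_of (\<Union>(range S0))"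
      using limitin_closedin[OF lim closedin_closure_of] by simp
    moreover have "countable (\<Union>(range S0))" "\<Union>(range S0) \<subseteq> S"
      using S0 by auto
    ultimately show "p \<in> K" unfolding K_def by blast
  qed
  moreover have "S \<subseteq> K"
  proof
    fix s assume "s \<in> S"
    then have "s \<in> T closure_of {s}" "countable {s}" "{s} \<subseteq> S"
      using S closure_of_subset[of "{s}" T] by auto
    then show "s \<in> K" unfolding K_def by blast
  qed
  ultimately have "x \<in> K" using x closure_of_minimal by blast
  then show ?thesis unfolding K_def by blast
qed

lemma symmetrizes_nonisolated_limitin:
  assumes d: "symmetrizes T d" and x: "x \<in> T closure_of (topspace T - {x})"
  shows "\<exists>\<sigma>. range \<sigma> \<subseteq> topspace T - {x} \<and> limitin T \<sigma> x sequentially"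
proof (rule ccontr)
  assume no_seq: "\<not> ?thesis"
  have "closedin T (topspace T - {x})"
  proof (rule symmetrizes_closedin_sequentially[OF d])
    fix \<sigma> p assume "range \<sigma> \<subseteq> topspace T - {x}" "limitin T \<sigma> p sequentially"
    then show "p \<in> topspace T - {x}" using no_seq limitin_topspace by fastforce
  qed auto
  then show False using x by (simp add: closure_of_closedin)
qed

lemma Hausdorff_limitin_nbhd_avoiding_range:
  assumes T: "Hausdorff_space T" and lim: "limitin T \<sigma> x sequentially"
    and p: "p \<in> topspace T" "p \<notin> range \<sigma>" "p \<noteq> x"
  shows "\<exists>U. openin T U \<and> p \<in> U \<and> U \<inter> range \<sigma> = {}"
proof -
  obtain O\<^sub>p O\<^sub>x where O: "openin T O\<^sub>p" "openin T O\<^sub>x" "p \<in> O\<^sub>p" "x \<in> O\<^sub>x" "disjnt O\<^sub>p O\<^sub>x"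
    using T p(1,3) limitin_topspace[OF lim] unfolding Hausdorff_space_def by metis
  then obtain N where N: "\<And>k. N \<le> k \<Longrightarrow> \<sigma> k \<in> O\<^sub>x"
    using lim unfolding limitin_sequentially by blast
  let ?F = "topspace T \<inter> \<sigma> ` {..<N}"
  have "closedin T ?F"
    using Hausdorff_imp_t1_space[OF T] unfolding t1_space_closedin_finite by auto
  then have "openin T (O\<^sub>p - ?F)" using O(1) by blast
  moreover have "p \<in> O\<^sub>p - ?F" using p O(3) by blast
  moreover have "\<sigma> k \<notin> O\<^sub>p - ?F" for k
  proof (cases "k < N")
    case True
    then show ?thesis using openin_subset[OF O(1)] by auto
  next
    case False
    then show ?thesis using N[of k] O(5) by (auto simp: disjnt_def)
  qed
  ultimately show ?thesis by blast
qed

lemma Hausdorff_symmetrizes_not_limitin: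
  assumes T: "Hausdorff_space T" and d: "symmetrizes T d"
    and e: "e > 0" and far: "\<And>k. e \<le> d x (\<sigma> k)"
  shows "\<not> limitin T \<sigma> x sequentially"
proof
  assume lim: "limitin T \<sigma> x sequentially"
  then have x: "x \<in> topspace T" by (rule limitin_topspace)
  have "openin T (topspace T - range \<sigma>)"
  proof (rule symmetrizes_openinI[OF d])
    fix p assume p: "p \<in> topspace T - range \<sigma>"
    show "\<exists>e>0. sball T d p e \<subseteq> topspace T - range \<sigma>"
    proof (cases "p = x")
      case True
      have "sball T d p e \<subseteq> topspace T - range \<sigma>"
        using leD[OF far] True by (auto simp: sball_def)
      with e show ?thesis by meson
    next
      case False
      then obtain U where U: "openin T U" "p \<in> U" "U \<inter> range \<sigma> = {}"
        using Hausdorff_limitin_nbhd_avoiding_range[OF T lim] p by blast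
      then obtain r where r: "r > 0" "sball T d p r \<subseteq> U"
        using symmetrizes_openinD[OF d] by meson
      then have "sball T d p r \<subseteq> topspace T - range \<sigma>" using U(3) by (auto simp: sball_def)
      with r(1) show ?thesis by meson
    qed
  qed auto
  moreover have "d x x = 0" using d x by (simp add: symmetrizes_def is_symmetric_on_def)
  then have "\<sigma> k \<noteq> x" for k using far[of k] e by auto
  then have "x \<in> topspace T - range \<sigma>" using x by auto
  ultimately have "eventually (\<lambda>k. \<sigma> k \<in> topspace T - range \<sigma>) sequentially"
    using lim unfolding limitin_def by blast
  then show False by (simp add: eventually_sequentially)
qed

definition Frechet_Urysohn_space :: "'a topology \<Rightarrow> bool" where
  "Frechet_Urysohn_space X \<longleftrightarrow>
     (\<forall>S x. S \<subseteq> topspace X \<and> x \<in> X closure_of S \<longrightarrow> (\<exists>\<sigma>. range \<sigma> \<subseteq> S \<and> limitin X \<sigma> x sequentially))"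

lemma Frechet_Urysohn_symmetrizes_imp_semi_metrizable:
  assumes T: "Hausdorff_space T" "Frechet_Urysohn_space T" and d: "symmetrizes T d"
  shows "semi_metrizable T"
  unfolding semi_metrizable_def
proof (intro exI[of _ d] conjI ballI allI impI)
  show "is_symmetric_on (topspace T) d" using d by (simp add: symmetrizes_def)
next
  fix x and e :: real assume x: "x \<in> topspace T" and e: "0 < e"
  let ?C = "topspace T - sball T d x e"
  have "x \<notin> T closure_of ?C"
  proof
    assume "x \<in> T closure_of ?C"
    then obtain \<sigma> where \<sigma>: "range \<sigma> \<subseteq> ?C" and lim: "limitin T \<sigma> x sequentially"
      using T(2) unfolding Frechet_Urysohn_space_def by blast
    have "e \<le> d x (\<sigma> k)" for k using \<sigma> by (auto simp: sball_def image_subset_iff not_less)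
    then show False using Hausdorff_symmetrizes_not_limitin[OF T(1) d e] lim by blast
  qed
  moreover have "topspace T - T closure_of ?C \<subseteq> sball T d x e"
    using closure_of_subset[of ?C T] by blast
  ultimately show "\<exists>V. openin T V \<and> x \<in> V \<and> V \<subseteq> sball T d x e"
    using x by (intro exI[of _ "topspace T - T closure_of ?C"]) auto
next
  fix x U assume "openin T U \<and> x \<in> U"
  then show "\<exists>e>0. sball T d x e \<subseteq> U" using symmetrizes_openinD[OF d] by meson
qed

section \<open>Sequences of fans\<close>

lemma regular_countable_pseudocharacter_shrinking_nbhds:
  assumes reg: "regular_space X" and cp: "countable_pseudocharacter X" and x: "x \<in> topspace X"
  obtains W :: "nat \<Rightarrow> 'a set"
  where "\<And>n. openin X (W n)" "\<And>n. x \<in> W n" "decseq W"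
    "\<And>p. p \<in> topspace X \<Longrightarrow> p \<noteq> x \<Longrightarrow> \<exists>n. p \<notin> X closure_of W n"
proof -
  obtain \<U> where \<U>: "countable \<U>" "\<U> \<noteq> {}" "\<forall>U\<in>\<U>. openin X U" "\<Inter>\<U> = {x}"
    using cp x unfolding countable_pseudocharacter_def by meson
  define U where "U n = from_nat_into \<U> n" for n
  have U: "openin X (U n)" "x \<in> U n" for n
  proof -
    have "U n \<in> \<U>" unfolding U_def by (rule from_nat_into[OF \<U>(2)])
    moreover have "x \<in> \<Inter>\<U>" using \<U>(4) by simp
    ultimately show "openin X (U n)" "x \<in> U n" using \<U>(3) by blast+
  qed
  have "\<exists>V. openin X V \<and> x \<in> V \<and> X closure_of V \<subseteq> U n" for n
  proof -
    have "closedin X (topspace X - U n)" using U(1) by (simp add: closedin_diff)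
    moreover have "x \<in> topspace X - (topspace X - U n)" using x U(2) by blast
    ultimately obtain V where V: "openin X V" "x \<in> V" "disjnt (topspace X - U n) (X closure_of V)"
      using reg unfolding regular_space by meson
    have "X closure_of V \<subseteq> U n"
      using V(3) closure_of_subset_topspace[of X V] by (auto simp: disjnt_def)
    with V(1,2) show ?thesis by meson
  qed
  then obtain V where V: "\<And>n. openin X (V n)" "\<And>n. x \<in> V n" "\<And>n. X closure_of V n \<subseteq> U n"
    by metis
  define W where "W n = \<Inter>(V ` {..n})" for n
  show thesis
  proof
    show "openin X (W n)" for n unfolding W_def using V(1) by (intro openin_Inter) auto
    show "x \<in> W n" for n unfolding W_def using V(2) by blast
    show "decseq W" unfolding decseq_def W_def by auto
    fix p assume "p \<in> topspace X" "p \<noteq> x"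
    then obtain U' where "U' \<in> \<U>" "p \<notin> U'" using \<U>(4) by blast
    then obtain n where "U n = U'" using from_nat_into_surj[OF \<U>(1)] unfolding U_def by metis
    have "X closure_of W n \<subseteq> X closure_of V n" unfolding W_def by (rule closure_of_mono) auto
    then show "\<exists>n. p \<notin> X closure_of W n" using V(3)[of n] \<open>U n = U'\<close> \<open>p \<notin> U'\<close> by blast
  qed
qed

lemma countable_closure_point_enumeration:
  assumes C: "countable C" "x \<in> X closure_of C" and W: "\<And>m. openin X (W m)" "\<And>m. x \<in> W m"
  shows "\<exists>c. (\<forall>m (j::nat). c m j \<in> C \<inter> W m) \<and> (\<forall>m V. openin X V \<and> x \<in> V \<longrightarrow> (\<exists>j. c m j \<in> V))"
proof (intro exI[of _ "\<lambda>m. from_nat_into (C \<inter> W m)"] conjI allI impI)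
  have CW: "C \<inter> W m \<noteq> {}" for m
    using C(2) W unfolding in_closure_of by blast
  show "from_nat_into (C \<inter> W m) j \<in> C \<inter> W m" for m j by (rule from_nat_into[OF CW])
  fix m V assume "openin X V \<and> x \<in> V"
  then have "openin X (V \<inter> W m)" "x \<in> V \<inter> W m" using W by auto
  then obtain c' where "c' \<in> C \<inter> W m" "c' \<in> V" using C(2) unfolding in_closure_of by blast
  moreover have "countable (C \<inter> W m)" using C(1) by simp
  ultimately show "\<exists>j. from_nat_into (C \<inter> W m) j \<in> V" using from_nat_into_surj by metis
qed

lemma eventually_in_finite_imp_frequently_eq:
  assumes "finite S" "eventually (\<lambda>x. f x \<in> S) F" "F \<noteq> bot"
  shows "\<exists>v\<in>S. frequently (\<lambda>x. f x = v) F"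
proof (rule ccontr)
  assume "\<not> ?thesis"
  then have "\<forall>v\<in>S. eventually (\<lambda>x. f x \<noteq> v) F" by (simp add: not_frequently)
  then have "eventually (\<lambda>x. \<forall>v\<in>S. f x \<noteq> v) F" by (rule eventually_ball_finite[OF assms(1)])
  with assms(2) have "eventually (\<lambda>x. False) F" by (rule eventually_elim2) auto
  then show False using assms(3) by (simp add: eventually_False)
qed

lemma is_symmetric_on_frequently_close_eq:
  assumes d: "is_symmetric_on S d" and "a \<in> S" "b \<in> S"
    and close: "frequently (\<lambda>k. d a b < inverse (real (Suc k))) sequentially"
  shows "a = b"
proof -
  have "d a b \<le> 0"
  proof (rule ccontr)
    assume "\<not> d a b \<le> 0"
    then have "eventually (\<lambda>k. inverse (real (Suc k)) < d a b) sequentially"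
      by (intro order_tendstoD(2)[OF LIMSEQ_inverse_real_of_nat]) simp
    with close have "frequently (\<lambda>k. d a b < inverse (real (Suc k)) \<and> inverse (real (Suc k)) < d a b) sequentially"
      by (rule frequently_eventually_frequently)
    then show False by (auto dest: frequently_ex)
  qed
  moreover have "0 \<le> d a b \<and> (d a b = 0 \<longleftrightarrow> a = b)"
    using d \<open>a \<in> S\<close> \<open>b \<in> S\<close> unfolding is_symmetric_on_def by simp
  ultimately show ?thesis by (meson antisym)
qed

lemma finite_avoids_decseq_closure_of:
  assumes F: "finite F" and W: "decseq W" and avoid: "\<And>p. p \<in> F \<Longrightarrow> \<exists>m. p \<notin> X closure_of W m"
  shows "\<exists>M. \<forall>p\<in>F. p \<notin> X closure_of W M"
proof -
  have "\<forall>p\<in>F. eventually (\<lambda>m. p \<notin> X closure_of W m) sequentially"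
  proof
    fix p assume "p \<in> F"
    then obtain m where m: "p \<notin> X closure_of W m" using avoid by blast
    show "eventually (\<lambda>m. p \<notin> X closure_of W m) sequentially"
      unfolding eventually_sequentially
    proof (intro exI allI impI)
      fix m' assume "m \<le> m'"
      then have "X closure_of W m' \<subseteq> X closure_of W m" by (intro closure_of_mono decseqD[OF W])
      then show "p \<notin> X closure_of W m'" using m by blast
    qed
  qed
  then have "eventually (\<lambda>m. \<forall>p\<in>F. p \<notin> X closure_of W m) sequentially"
    by (rule eventually_ball_finite[OF F])
  then show ?thesis by (rule eventually_happens'[OF sequentially_bot])
qed

lemma limitin_vietoris_fan_bounded_index:
  assumes lim: "limitin (vietoris_fin X) (\<lambda>k. A (n k) (r k)) B sequentially"
    and x: "x \<in> topspace X"
    and W: "\<And>m. openin X (W m)" "decseq W" "\<And>p. p \<in> topspace X \<Longrightarrow> p \<noteq> x \<Longrightarrow> \<exists>m. p \<notin> X closure_of W m"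
    and c: "\<And>m j. c m j \<in> A m j \<inter> C \<inter> W m"
    and no_seq: "\<nexists>\<sigma>. range \<sigma> \<subseteq> C \<and> limitin X \<sigma> x sequentially"
  shows "\<exists>M. eventually (\<lambda>k. n k < M) sequentially"
proof -
  have B: "finite B" "B \<subseteq> topspace X" using limitin_topspace[OF lim] by (auto simp: fin_subsets_def)
  obtain M where M: "\<forall>b\<in>B - {x}. b \<notin> X closure_of W M"
    using finite_avoids_decseq_closure_of[of "B - {x}" W X] B W(2,3) by blast
  show ?thesis
  proof (rule exI[of _ M], rule ccontr)
    assume "\<not> eventually (\<lambda>k. n k < M) sequentially"
    then obtain s :: "nat \<Rightarrow> nat" where s: "strict_mono s" "\<And>i. \<not> n (s i) < M"
      by (auto dest!: not_eventually_sequentiallyD)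
    have "limitin X (\<lambda>i. c (n (s i)) (r (s i))) x sequentially"
      unfolding limitin_def
    proof (intro conjI allI impI)
      fix Q assume Q: "openin X Q \<and> x \<in> Q"
      let ?V = "Q \<union> (topspace X - X closure_of W M)"
      have "openin X ?V" using Q by (intro openin_Un openin_diff) auto
      moreover have "B \<subseteq> ?V" using M Q B(2) by blast
      ultimately have "eventually (\<lambda>k. A (n k) (r k) \<subseteq> ?V) sequentially"
        by (rule limitin_vietoris_fin_subset[OF lim])
      then have "eventually (\<lambda>i. A (n (s i)) (r (s i)) \<subseteq> ?V) sequentially"
        by (rule eventually_subseq[OF s(1)])
      then show "eventually (\<lambda>i. c (n (s i)) (r (s i)) \<in> Q) sequentially"
      proof (rule eventually_mono)
        fix i assume sub: "A (n (s i)) (r (s i)) \<subseteq> ?V"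
        have "W (n (s i)) \<subseteq> W M" using s(2)[of i] by (intro decseqD[OF W(2)]) simp
        also have "\<dots> \<subseteq> X closure_of W M" by (rule closure_of_subset[OF openin_subset[OF W(1)]])
        finally have "c (n (s i)) (r (s i)) \<in> X closure_of W M" using c by blast
        then show "c (n (s i)) (r (s i)) \<in> Q" using sub c by blast
      qed
    qed (rule x)
    moreover have "range (\<lambda>i. c (n (s i)) (r (s i))) \<subseteq> C" using c by blast
    ultimately show False using no_seq by blast
  qed
qed

lemma limitin_vietoris_fan_finite_indices:
  assumes X: "t1_space X" and lim: "limitin (vietoris_fin X) (\<lambda>k. A (n k) (r k)) B sequentially"
    and y: "range y \<subseteq> topspace X - {x}" "limitin X y x sequentially"
    and fan: "\<And>m j i. m \<le> i \<Longrightarrow> i \<le> m + j \<Longrightarrow> y i \<in> A m j"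
    and bounded: "eventually (\<lambda>k. n k < M) sequentially"
  shows "\<exists>J. eventually (\<lambda>k. n k < J \<and> r k < J) sequentially"
proof -
  have B: "finite B" "B \<subseteq> topspace X" using limitin_topspace[OF lim] by (auto simp: fin_subsets_def)
  have "closedin X (B - {x})" using X B unfolding t1_space_closedin_finite by auto
  then have "openin X (topspace X - (B - {x}))" by (intro openin_diff) auto
  moreover have "x \<in> topspace X - (B - {x})" using limitin_topspace[OF y(2)] by blast
  ultimately have "eventually (\<lambda>i. y i \<in> topspace X - (B - {x})) sequentially"
    using y(2) unfolding limitin_def by blast
  then have "eventually (\<lambda>i. M \<le> i \<and> y i \<notin> B) sequentially"
    by (rule eventually_elim2[OF _ eventually_ge_at_top[of M]]) (use y(1) in auto)
  then obtain J where J: "M \<le> J" "y J \<notin> B"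
    by (auto dest: eventually_happens'[OF sequentially_bot])
  have "y J \<in> topspace X" using y(1) by auto
  then have "openin X (topspace X - {y J})" using X by (intro openin_diff closedin_t1_singleton) auto
  moreover have "B \<subseteq> topspace X - {y J}" using B(2) J(2) by blast
  ultimately have "eventually (\<lambda>k. A (n k) (r k) \<subseteq> topspace X - {y J}) sequentially"
    by (rule limitin_vietoris_fin_subset[OF lim])
  then have "eventually (\<lambda>k. n k + r k < J) sequentially"
    using bounded
  proof (rule eventually_elim2)
    fix k assume "A (n k) (r k) \<subseteq> topspace X - {y J}" "n k < M"
    then have "\<not> (n k \<le> J \<and> J \<le> n k + r k)" using fan by blast
    then show "n k + r k < J" using \<open>n k < M\<close> J(1) by linarith
  qed
  then show ?thesis by (intro exI[of _ J]) (auto elim: eventually_mono)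
qed

lemma not_closedin_vietoris_fan_family:
  assumes x: "x \<in> topspace X" and y: "range y \<subseteq> topspace X - {x}" "limitin X y x sequentially"
    and c_hits: "\<forall>m V. openin X V \<and> x \<in> V \<longrightarrow> (\<exists>j. c m j \<in> V)"
    and A: "\<And>m j. A m j = insert (c m j) (insert x (y ` {m..m + j}))" "\<And>m j. A m j \<in> fin_subsets X"
  shows "\<not> closedin (vietoris_fin X) (range (case_prod A))"
proof
  assume "closedin (vietoris_fin X) (range (case_prod A))"
  moreover have "{x} \<notin> range (case_prod A)"
  proof
    assume "{x} \<in> range (case_prod A)"
    then obtain m j where "{x} = A m j" by auto
    moreover have "y m \<in> A m j" by (simp add: A(1))
    ultimately show False using y(1) by auto
  qed
  ultimately have "openin (vietoris_fin X) (fin_subsets X - range (case_prod A))"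
    "{x} \<in> fin_subsets X - range (case_prod A)"
    using x by (auto simp: closedin_def fin_subsets_def)
  then obtain V where V: "openin X V" "x \<in> V"
    "\<forall>E\<in>fin_subsets X. E \<subseteq> V \<longrightarrow> E \<in> fin_subsets X - range (case_prod A)"
    using vietoris_fin_nbhd_singleton by meson
  obtain N where N: "\<And>i. N \<le> i \<Longrightarrow> y i \<in> V" using y(2) V(1,2) unfolding limitin_sequentially by meson
  obtain j where "c N j \<in> V" using c_hits V(1,2) by blast
  then have "A N j \<subseteq> V" using N V(2) by (auto simp: A(1))
  then show False using V(3) A(2)[of N j] by auto
qed

section \<open>Symmetrics on the finite subsets\<close>

context
  fixes X :: "'a topology" and D :: "'a set \<Rightarrow> 'a set \<Rightarrow> real"
  assumes Hausdorff: "Hausdorff_space X" and D: "symmetrizes (vietoris_fin X) D"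
begin

lemma openin_vietoris_fin_avoiding_singletons:
  assumes ball: "\<forall>p\<in>U. \<exists>e>0. sball X (\<lambda>p q. D {p} {q}) p e \<subseteq> U"
  shows "openin (vietoris_fin X) (fin_subsets X - (\<lambda>p. {p}) ` (topspace X - U))"
    (is "openin _ ?Q")
proof (rule symmetrizes_openinI[OF D])
  fix E assume E: "E \<in> ?Q"
  show "\<exists>e>0. sball (vietoris_fin X) D E e \<subseteq> ?Q"
  proof (cases "E \<in> (\<lambda>p. {p}) ` topspace X")
    case True
    then obtain p where p: "p \<in> U" "E = {p}" using E by auto
    then obtain e where e: "e > 0" "sball X (\<lambda>p q. D {p} {q}) p e \<subseteq> U" using ball by meson
    have "sball (vietoris_fin X) D E e \<subseteq> ?Q"
    proof
      fix E' assume E': "E' \<in> sball (vietoris_fin X) D E e"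
      have "q \<in> U" if "q \<in> topspace X" "E' = {q}" for q
        using E' that p(2) e(2) by (auto simp: sball_def)
      then show "E' \<in> ?Q" using E' by (auto simp: sball_def)
    qed
    with e(1) show ?thesis by meson
  next
    case False
    then have "E \<in> fin_subsets X - (\<lambda>p. {p}) ` topspace X" using E by blast
    then obtain e where e: "e > 0" "sball (vietoris_fin X) D E e \<subseteq> fin_subsets X - (\<lambda>p. {p}) ` topspace X"
      using symmetrizes_openinD[OF D openin_vietoris_fin_non_singletons[OF Hausdorff]] by meson
    moreover have "fin_subsets X - (\<lambda>p. {p}) ` topspace X \<subseteq> ?Q" by blast
    ultimately show ?thesis by (meson subset_trans)
  qed
qed auto

lemma symmetrizes_singletons: "symmetrizes X (\<lambda>p q. D {p} {q})"
proof (rule symmetrizesI)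
  have D_sym: "is_symmetric_on (fin_subsets X) D" using D by (simp add: symmetrizes_def)
  show "is_symmetric_on (topspace X) (\<lambda>p q. D {p} {q})"
    unfolding is_symmetric_on_def
  proof (intro ballI)
    fix p q assume "p \<in> topspace X" "q \<in> topspace X"
    then have "{p} \<in> fin_subsets X" "{q} \<in> fin_subsets X" by (auto simp: fin_subsets_def)
    then show "0 \<le> D {p} {q} \<and> (D {p} {q} = 0 \<longleftrightarrow> p = q) \<and> D {p} {q} = D {q} {p}"
      using D_sym[unfolded is_symmetric_on_def, rule_format, of "{p}" "{q}"] by (metis singleton_inject)
  qed
next
  fix U p assume U: "openin X U" and p: "p \<in> U"
  have "openin (vietoris_fin X) (vietoris_basic X [U])" using U by (intro openin_vietoris_basic) simp
  moreover have "{p} \<in> vietoris_basic X [U]"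
    using p openin_subset[OF U] by (auto simp: vietoris_basic_def fin_subsets_def)
  ultimately obtain e where e: "e > 0" "sball (vietoris_fin X) D {p} e \<subseteq> vietoris_basic X [U]"
    using symmetrizes_openinD[OF D] by meson
  have "q \<in> U" if "q \<in> sball X (\<lambda>p q. D {p} {q}) p e" for q
  proof -
    have "{q} \<in> sball (vietoris_fin X) D {p} e" using that by (simp add: sball_def fin_subsets_def)
    then have "{q} \<in> vietoris_basic X [U]" by (rule subsetD[OF e(2)])
    then show ?thesis by (simp add: vietoris_basic_def)
  qed
  with e(1) show "\<exists>e>0. sball X (\<lambda>p q. D {p} {q}) p e \<subseteq> U" by blast
next
  fix U assume U: "U \<subseteq> topspace X" and ball: "\<forall>p\<in>U. \<exists>e>0. sball X (\<lambda>p q. D {p} {q}) p e \<subseteq> U"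
  then show "openin X U"
    by (intro openin_from_vietoris_fin[OF U] openin_vietoris_fin_avoiding_singletons)
qed

lemma closedin_vietoris_fan_family:
  assumes x: "x \<in> topspace X"
    and y: "range y \<subseteq> topspace X - {x}" "limitin X y x sequentially"
    and W: "\<And>m. openin X (W m)" "decseq W" "\<And>p. p \<in> topspace X \<Longrightarrow> p \<noteq> x \<Longrightarrow> \<exists>m. p \<notin> X closure_of W m"
    and no_seq: "\<nexists>\<sigma>. range \<sigma> \<subseteq> C \<and> limitin X \<sigma> x sequentially"
    and A: "\<And>m j. A m j \<in> fin_subsets X" "\<And>m j. c m j \<in> A m j \<inter> C \<inter> W m"
      "\<And>m j i. m \<le> i \<Longrightarrow> i \<le> m + j \<Longrightarrow> y i \<in> A m j"
  shows "closedin (vietoris_fin X) (range (case_prod A))"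
proof -
  have "\<exists>e>0. sball (vietoris_fin X) D B e \<subseteq> fin_subsets X - range (case_prod A)"
    if B: "B \<in> fin_subsets X - range (case_prod A)" for B
  proof (rule ccontr)
    assume far: "\<nexists>e. e > 0 \<and> sball (vietoris_fin X) D B e \<subseteq> fin_subsets X - range (case_prod A)"
    have "\<exists>m j. D B (A m j) < inverse (Suc k)" for k
    proof -
      have "inverse (real (Suc k)) > 0" by simp
      then have "\<not> sball (vietoris_fin X) D B (inverse (Suc k)) \<subseteq> fin_subsets X - range (case_prod A)"
        using far by meson
      then show ?thesis by (auto simp: sball_def)
    qed
    then obtain n r where nr: "\<And>k. D B (A (n k) (r k)) < inverse (Suc k)" by metis
    have lim: "limitin (vietoris_fin X) (\<lambda>k. A (n k) (r k)) B sequentially"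
      using B A(1) nr by (intro symmetrizes_limitin[OF D]) auto
    obtain M where "eventually (\<lambda>k. n k < M) sequentially"
      using limitin_vietoris_fan_bounded_index[where A = A and n = n and r = r, OF lim x W A(2) no_seq] by blast
    then obtain J where "eventually (\<lambda>k. n k < J \<and> r k < J) sequentially"
      using limitin_vietoris_fan_finite_indices[where A = A and n = n and r = r,
        OF Hausdorff_imp_t1_space[OF Hausdorff] lim y A(3)]
      by blast
    then have "eventually (\<lambda>k. (n k, r k) \<in> {..<J} \<times> {..<J}) sequentially"
      by (auto elim: eventually_mono)
    then have "\<exists>v\<in>{..<J} \<times> {..<J}. frequently (\<lambda>k. (n k, r k) = v) sequentially"
      by (intro eventually_in_finite_imp_frequently_eq) auto
    then obtain v where "frequently (\<lambda>k. (n k, r k) = v) sequentially" by blast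
    then have "frequently (\<lambda>k. D B (case_prod A v) < inverse (real (Suc k))) sequentially"
      by (rule frequently_mono[rotated]) (metis nr old.prod.case)
    moreover have "B \<in> fin_subsets X" "case_prod A v \<in> fin_subsets X"
      using B A(1) by (auto split: prod.split)
    ultimately have "B = case_prod A v"
      using is_symmetric_on_frequently_close_eq[of "fin_subsets X" D] D
      by (simp add: symmetrizes_def)
    then show False using B by auto
  qed
  then have "openin (vietoris_fin X) (fin_subsets X - range (case_prod A))"
    by (intro symmetrizes_openinI[OF D]) auto
  then show ?thesis using A(1) by (auto simp: closedin_def)
qed

lemma Frechet_Urysohn_space_if_symmetrizes_vietoris:
  assumes reg: "regular_space X" and cp: "countable_pseudocharacter X"
  shows "Frechet_Urysohn_space X"
  unfolding Frechet_Urysohn_space_def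
proof (intro allI impI)
  fix C x assume C: "C \<subseteq> topspace X \<and> x \<in> X closure_of C"
  then have x: "x \<in> topspace X" using closure_of_subset_topspace by fastforce
  show "\<exists>\<sigma>. range \<sigma> \<subseteq> C \<and> limitin X \<sigma> x sequentially"
  proof (rule ccontr)
    assume no_seq: "\<nexists>\<sigma>. range \<sigma> \<subseteq> C \<and> limitin X \<sigma> x sequentially"
    have "x \<notin> C"
    proof
      assume "x \<in> C"
      then have "range (\<lambda>k::nat. x) \<subseteq> C \<and> limitin X (\<lambda>k. x) x sequentially" using x by auto
      with no_seq show False by blast
    qed
    have d: "symmetrizes X (\<lambda>p q. D {p} {q})" by (rule symmetrizes_singletons)
    obtain C\<^sub>0 where C\<^sub>0: "C\<^sub>0 \<subseteq> C" "countable C\<^sub>0" "x \<in> X closure_of C\<^sub>0"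
      using symmetrizes_countable_tightness[OF d] C by meson
    have "C\<^sub>0 \<subseteq> topspace X - {x}" using C\<^sub>0(1) C \<open>x \<notin> C\<close> by blast
    then have "x \<in> X closure_of (topspace X - {x})" using closure_of_mono C\<^sub>0(3) by blast
    then obtain y where y: "range y \<subseteq> topspace X - {x}" "limitin X y x sequentially"
      using symmetrizes_nonisolated_limitin[OF d] by meson
    obtain W where W: "\<And>m. openin X (W m)" "\<And>m. x \<in> W m" "decseq W"
      "\<And>p. p \<in> topspace X \<Longrightarrow> p \<noteq> x \<Longrightarrow> \<exists>m. p \<notin> X closure_of W m"
      using regular_countable_pseudocharacter_shrinking_nbhds[OF reg cp x] by metis
    obtain c :: "nat \<Rightarrow> nat \<Rightarrow> 'a" where c: "\<forall>m j. c m j \<in> C\<^sub>0 \<inter> W m"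
      and c_hits: "\<forall>m V. openin X V \<and> x \<in> V \<longrightarrow> (\<exists>j. c m j \<in> V)"
      using countable_closure_point_enumeration[where W = W, OF C\<^sub>0(2,3) W(1,2)] by blast
    define A where "A m j = insert (c m j) (insert x (y ` {m..m + j}))" for m j
    have A: "A m j \<in> fin_subsets X" for m j
    proof -
      have "c m j \<in> topspace X" using c C\<^sub>0(1) C by blast
      then show ?thesis using x y(1) by (auto simp: A_def fin_subsets_def image_subset_iff)
    qed
    have "closedin (vietoris_fin X) (range (case_prod A))"
    proof (rule closedin_vietoris_fan_family[OF x y W(1,3)])
      show "\<nexists>\<sigma>. range \<sigma> \<subseteq> C\<^sub>0 \<and> limitin X \<sigma> x sequentially" using no_seq C\<^sub>0(1) by blast
      show "c m j \<in> A m j \<inter> C\<^sub>0 \<inter> W m" for m j using c by (simp add: A_def)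
      show "y i \<in> A m j" if "m \<le> i" "i \<le> m + j" for m j i using that by (simp add: A_def)
    qed (fact W(4) A)+
    moreover have "\<not> closedin (vietoris_fin X) (range (case_prod A))"
      by (rule not_closedin_vietoris_fan_family[OF x y c_hits A_def A])
    ultimately show False by blast
  qed
qed

end

lemma symmetrizable_vietoris_fin_imp_semi_metrizable:
  assumes "regular_space X" "Hausdorff_space X" "countable_pseudocharacter X"
    and "symmetrizable (vietoris_fin X)"
  shows "semi_metrizable X"
proof -
  obtain D where D: "symmetrizes (vietoris_fin X) D"
    using assms(4) by (auto simp: symmetrizable_iff_symmetrizes)
  show ?thesis
    using Frechet_Urysohn_symmetrizes_imp_semi_metrizable[OF assms(2)
        Frechet_Urysohn_space_if_symmetrizes_vietoris[OF assms(2) D assms(1,3)]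
        symmetrizes_singletons[OF assms(2) D]] .
qed

theorem theorem4p11:
  fixes X :: "'a topology"
  assumes "regular_space X" and "Hausdorff_space X" and "countable_pseudocharacter X"
  shows "(semi_metrizable X \<longleftrightarrow> symmetrizable (vietoris_fin X))
       \<and> (symmetrizable (vietoris_fin X) \<longleftrightarrow> semi_metrizable (vietoris_fin X))"
  using semi_metrizable_vietoris_fin semi_metrizable_imp_symmetrizable
    symmetrizable_vietoris_fin_imp_semi_metrizable[OF assms] by blast

end
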